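(* Let $H\ge 1$ be an integer and let $n_0,n_1,\dots,n_H$ be positive integers with $n_0=d$ and $n_H=1$ (the layer widths of a fully-connected feed-forward network with $d$ inputs, depth $H$ and a single output). Define the mass $\Psi=\prod_{i=0}^{H} n_i$, the quantity $\Lambda=\sqrt[H]{\Psi}$, and the size $N=\sum_{i=0}^{H-1} n_i n_{i+1}$. Then \[ \Psi^2 H=\Lambda^{2H}H\;\ge\; N\;\ge\; \sqrt[H]{\Psi^2}\,\frac{H}{\sqrt[H]{d}}\;\ge\;\sqrt[H]{\Psi}=\Lambda . \]
   Context: The network has layers $0,1,\dots,H$, where layer $i$ has $n_i$ units, layer $0$ is the input layer and layer $H$ is the output layer; consecutive layers are fully connected, so $N$ is the total number of weights and $\Psi$ is the total number of input-to-output paths. *)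

theory Defs
  imports Complex_Main
begin

definition mass :: "nat \<Rightarrow> (nat \<Rightarrow> nat) \<Rightarrow> real" where
  "mass H n = real (\<Prod>i\<le>H. n i)"

definition Lambda :: "nat \<Rightarrow> (nat \<Rightarrow> nat) \<Rightarrow> real" where
  "Lambda H n = root H (mass H n)"

definition size_net :: "nat \<Rightarrow> (nat \<Rightarrow> nat) \<Rightarrow> real" where
  "size_net H n = real (\<Sum>i<H. n i * n (Suc i))"

end

theory Submission
  imports Defs "HOL-Analysis.Analysis"
begin

text \<open>Writing \<open>Q\<close> for the product of the edge counts \<open>n\<^sub>i n\<^sub>i\<^sub>+\<^sub>1\<close>, every layer except the two
  ends occurs twice in \<open>Q\<close>, so \<open>\<Psi>\<^sup>2 = d Q\<close> when \<open>n\<^sub>H = 1\<close>; as \<open>1 \<le> d \<le> \<Psi>\<close>, this gives \<open>\<Psi> \<le> Q \<le> \<Psi>\<^sup>2\<close>.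
  The size \<open>N\<close> is a sum of \<open>H\<close> edge counts, each a factor of \<open>Q\<close>, whence \<open>N \<le> H Q\<close>;
  and by AM-GM \<open>N \<ge> H Q\<^bsup>1/H\<^esup> = H (\<Psi>\<^sup>2/d)\<^bsup>1/H\<^esup>\<close>.\<close>

lemma prod_squared_eq_ends_times_prod_edges:
  fixes n :: "nat \<Rightarrow> 'a::comm_semiring_1"
  shows "(\<Prod>i\<le>H. n i)\<^sup>2 = n 0 * n H * (\<Prod>i<H. n i * n (Suc i))"
proof -
  have "(\<Prod>i\<le>H. n i) = (\<Prod>i<H. n i) * n H"
    by (simp flip: lessThan_Suc_atMost)
  moreover have "(\<Prod>i\<le>H. n i) = n 0 * (\<Prod>i<H. n (Suc i))"
    by (simp only: prod.lessThan_Suc_shift flip: lessThan_Suc_atMost)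
  ultimately have "(\<Prod>i\<le>H. n i)\<^sup>2 = ((\<Prod>i<H. n i) * n H) * (n 0 * (\<Prod>i<H. n (Suc i)))"
    by (metis power2_eq_square)
  also have "\<dots> = n 0 * n H * (\<Prod>i<H. n i * n (Suc i))"
    by (simp add: prod.distrib mult_ac)
  finally show ?thesis .
qed

lemma member_le_prod_nat:
  fixes f :: "'a \<Rightarrow> nat"
  assumes "finite A" "i \<in> A" "\<And>j. j \<in> A \<Longrightarrow> 0 < f j"
  shows "f i \<le> prod f A"
  using assms by (intro dvd_imp_le) auto

lemma sum_le_card_mult_prod_nat:
  fixes f :: "'a \<Rightarrow> nat"
  assumes "finite A" "\<And>j. j \<in> A \<Longrightarrow> 0 < f j"
  shows "sum f A \<le> card A * prod f A"
proof -
  have "f i \<le> prod f A" if "i \<in> A" for i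
    using member_le_prod_nat[OF assms(1) that assms(2)] .
  then show ?thesis
    using sum_bounded_above[of A f "prod f A"] by simp
qed

lemma card_mult_root_prod_le_sum:
  fixes x :: "'a \<Rightarrow> real"
  assumes "finite S" "\<And>i. i \<in> S \<Longrightarrow> 0 \<le> x i"
  shows "card S * root (card S) (prod x S) \<le> sum x S"
proof (cases "S = {}")
  case False
  then have "card S > 0"
    using assms(1) by (simp add: card_gt_0_iff)
  moreover have "root (card S) (prod x S) = prod x S powr (1 / card S)"
    using \<open>card S > 0\<close> assms(2) by (simp add: root_powr_inverse prod_nonneg)
  ultimately show ?thesis
    using arith_geom_mean[OF assms(1) False assms(2)]
    by (simp add: sum_divide_distrib[symmetric] field_simps)
qed simp

definition edge_product :: "nat \<Rightarrow> (nat \<Rightarrow> nat) \<Rightarrow> nat" where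
  "edge_product H n = (\<Prod>i<H. n i * n (Suc i))"

lemma mass_squared_eq_edge_product:
  "(mass H n)\<^sup>2 = n 0 * n H * edge_product H n"
  using prod_squared_eq_ends_times_prod_edges[of "\<lambda>i. real (n i)" H]
  by (simp add: mass_def edge_product_def)

lemma edge_product_le_mass_squared:
  assumes "\<And>i. i \<le> H \<Longrightarrow> 0 < n i"
  shows "edge_product H n \<le> (mass H n)\<^sup>2"
proof -
  have "1 \<le> n 0 * n H"
    using assms[of 0] assms[of H] by (simp add: Suc_le_eq)
  then have "real (edge_product H n) \<le> n 0 * n H * edge_product H n"
    by (metis mult_le_mono1 mult_1 of_nat_le_iff)
  then show ?thesis
    by (simp add: mass_squared_eq_edge_product)
qed

lemma mass_le_edge_product:
  assumes "\<And>i. i \<le> H \<Longrightarrow> 0 < n i" and "n H = 1"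
  shows "mass H n \<le> edge_product H n"
proof -
  have "n 0 \<le> mass H n"
    using member_le_prod_nat[of "{..H}" 0 n] assms(1) by (simp add: mass_def del: of_nat_prod)
  then have "n 0 * mass H n \<le> mass H n * mass H n"
    by (rule mult_right_mono) (simp add: mass_def del: of_nat_prod)
  also have "\<dots> = n 0 * edge_product H n"
    using mass_squared_eq_edge_product[of H n] assms(2) by (simp add: power2_eq_square)
  finally have "n 0 * mass H n \<le> n 0 * edge_product H n" .
  then show ?thesis
    using assms(1)[of 0] by simp
qed

lemma size_net_le_card_mult_edge_product:
  assumes "\<And>i. i \<le> H \<Longrightarrow> 0 < n i"
  shows "size_net H n \<le> real H * edge_product H n"
proof -
  have "(\<Sum>i<H. n i * n (Suc i)) \<le> H * edge_product H n"
    using sum_le_card_mult_prod_nat[of "{..<H}" "\<lambda>i. n i * n (Suc i)"] assms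
    by (simp add: edge_product_def)
  then show ?thesis
    unfolding size_net_def by (metis of_nat_le_iff of_nat_mult)
qed

lemma card_mult_root_edge_product_le_size_net:
  "H * root H (edge_product H n) \<le> size_net H n"
  using card_mult_root_prod_le_sum[of "{..<H}" "\<lambda>i. real (n i * n (Suc i))"]
  by (simp add: size_net_def edge_product_def)

lemma Lambda_power_double:
  assumes "0 < H"
  shows "Lambda H n ^ (2 * H) = (mass H n)\<^sup>2"
  using assms
  by (simp add: Lambda_def mass_def power_mult real_root_pow_pos2 mult.commute del: of_nat_prod)

theorem theorem3p1:
  fixes H d :: nat and n :: "nat \<Rightarrow> nat"
  assumes "H \<ge> 1"
    and "\<And>i. i \<le> H \<Longrightarrow> n i > 0"
    and "n 0 = d"
    and "n H = 1"
  shows "(mass H n)\<^sup>2 * real H = (Lambda H n) ^ (2 * H) * real H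
    \<and> (Lambda H n) ^ (2 * H) * real H \<ge> size_net H n
    \<and> size_net H n \<ge> root H ((mass H n)\<^sup>2) * real H / root H (real d)
    \<and> root H ((mass H n)\<^sup>2) * real H / root H (real d) \<ge> root H (mass H n)
    \<and> root H (mass H n) = Lambda H n"
proof -
  let ?Q = "real (edge_product H n)"
  have "0 < d"
    using assms(2)[of 0] assms(3) by simp
  have "size_net H n \<le> H * ?Q"
    using assms(2) by (rule size_net_le_card_mult_edge_product)
  also have "\<dots> \<le> H * (mass H n)\<^sup>2"
    using edge_product_le_mass_squared assms(2) by (intro mult_left_mono) simp_all
  finally have "size_net H n \<le> (mass H n)\<^sup>2 * H"
    by (simp only: mult.commute)
  moreover have "root H ((mass H n)\<^sup>2) * H / root H d = H * root H ?Q"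
    using assms(1,3,4) \<open>0 < d\<close>
    by (simp add: mass_squared_eq_edge_product real_root_mult)
  moreover have "root H (mass H n) \<le> H * root H ?Q"
  proof -
    have "root H (mass H n) \<le> root H ?Q"
      using mass_le_edge_product[of H n] assms(1,2,4) by simp
    also have "\<dots> \<le> H * root H ?Q"
      using assms(1) by (simp add: mult_le_cancel_right1)
    finally show ?thesis .
  qed
  ultimately show ?thesis
    using Lambda_power_double[of H n] card_mult_root_edge_product_le_size_net[of H n] assms(1)
    by (simp add: Lambda_def)
qed

end
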